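(* For every $n\ge0$ and every $t\in\mathbb{R}$, $Q_n(1-t)=(-1)^n\sigma_n(t)$.
   Context: For positive integers $j$: $\sigma_0(j)=1$, $\sigma_i(j)=\sum_{1\le n_1<\cdots<n_i\le j-1}n_1\cdots n_i$ for $1\le i\le j-1$, $\sigma_i(j)=0$ for $i\ge j$; $Q_0(j)=1$ and $Q_k(j)=-\sum_{i=1}^k\sigma_i(j)Q_{k-i}(j)$ for $k\ge1$. For each fixed $n$, $\sigma_n(j)$ and $Q_n(j)$ agree on all positive integers $j$ with polynomials in $j$; $\sigma_n(t)$ and $Q_n(t)$ for real $t$ denote these polynomials evaluated at $t$. *)

theory Defs
  imports "HOL-Computational_Algebra.Polynomial"
begin

definition sigma_int :: "nat \<Rightarrow> nat \<Rightarrow> real" where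
  "sigma_int i j =
     (if i = 0 then 1
      else if i \<le> j - 1 then
        (\<Sum>S \<in> {S. S \<subseteq> {1..j-1} \<and> card S = i}. real (\<Prod>S))
      else 0)"

function Q_int :: "nat \<Rightarrow> nat \<Rightarrow> real" where
  "Q_int 0 j = 1"
| "Q_int (Suc k) j = - (\<Sum>i\<in>{1..Suc k}. sigma_int i j * Q_int (Suc k - i) j)"
  by pat_completeness auto
termination
  by (relation "measure fst") auto

definition sigma_poly :: "nat \<Rightarrow> real poly" where
  "sigma_poly n = (THE p. \<forall>j::nat. j \<ge> 1 \<longrightarrow> poly p (real j) = sigma_int n j)"

definition Q_poly :: "nat \<Rightarrow> real poly" where
  "Q_poly n = (THE p. \<forall>j::nat. j \<ge> 1 \<longrightarrow> poly p (real j) = Q_int n j)"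

end

theory Submission
  imports Defs "HOL-Computational_Algebra.Polynomial_FPS"
begin

text \<open>
  The polynomial F_j = (1 + X)(1 + 2X)...(1 + (j-1)X) has the sigma_i(j) as coefficients,
  and the defining recurrence of Q says that the power series sum_k Q_k(j) X^k is its
  reciprocal. Since F_(j+1) = F_j (1 + jX), comparing coefficients gives
    sigma_(n+1)(j+1) = sigma_(n+1)(j) + j sigma_n(j)  and  Q_(n+1)(j) = Q_(n+1)(j+1) + j Q_n(j+1).
  The first recurrence makes sigma_(n+1) a discrete antiderivative of t sigma_n(t), so it is a
  polynomial and the recurrence holds for all real t. Substituting -t for t shows that
  (-1)^n sigma_n(1 - t) satisfies the second recurrence; it also agrees with Q_n at t = 1, so by
  induction on n and j the two agree on all positive integers, hence as polynomials.
\<close>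

lemma poly_eqI_of_nat_pos:
  fixes p q :: "'a::{idom,ring_char_0} poly"
  assumes "\<And>j. j \<ge> 1 \<Longrightarrow> poly p (of_nat j) = poly q (of_nat j)"
  shows "p = q"
proof (rule ccontr)
  assume "p \<noteq> q"
  then have "finite {x. poly (p - q) x = 0}"
    by (intro poly_roots_finite) simp
  moreover have "of_nat ` {1..} \<subseteq> {x. poly (p - q) x = 0}"
    using assms by auto
  ultimately have "finite (of_nat ` {(1::nat)..} :: 'a set)"
    by (rule finite_subset[rotated])
  then show False
    using infinite_Ici[of "1::nat"] by (auto dest: finite_imageD simp: inj_on_def)
qed

lemma The_poly_eqI:
  fixes p :: "'a::{idom,ring_char_0} poly"
  assumes "\<And>j. j \<ge> 1 \<Longrightarrow> poly p (of_nat j) = f j"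
  shows "(THE p. \<forall>j::nat. j \<ge> 1 \<longrightarrow> poly p (of_nat j) = f j) = p"
  using assms by (intro the_equality) (auto intro: poly_eqI_of_nat_pos)

lemma power_Suc_add_1_diff:
  fixes x :: "'a::comm_ring_1"
  shows "(x + 1) ^ Suc k - x ^ Suc k
    = (\<Sum>i<k. of_nat (Suc k choose i) * x ^ i) + of_nat (Suc k) * x ^ k"
  by (subst binomial_ring)
    (simp add: lessThan_Suc_atMost[symmetric] del: power_Suc of_nat_Suc, simp)

lemma poly_antidifference_power:
  "\<exists>q :: 'a::field_char_0 poly. \<forall>x. poly q (x + 1) - poly q x = x ^ k"
proof (induction k rule: less_induct)
  case (less k)
  then obtain Q :: "nat \<Rightarrow> 'a poly"
    where Q: "\<And>i x. i < k \<Longrightarrow> poly (Q i) (x + 1) - poly (Q i) x = x ^ i"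
    by metis
  txt \<open>(x + 1)^(k+1) - x^(k+1) is (k + 1) x^k plus lower powers, whose antidifferences
    are known by induction.\<close>
  define S where "S = (\<Sum>i<k. smult (of_nat (Suc k choose i)) (Q i))"
  define q where "q = smult (inverse (of_nat (Suc k))) (monom 1 (Suc k) - S)"
  have S_diff: "poly S (x + 1) - poly S x = (\<Sum>i<k. of_nat (Suc k choose i) * x ^ i)" for x
    unfolding S_def poly_sum sum_subtractf[symmetric]
    by (intro sum.cong) (simp_all add: Q right_diff_distrib[symmetric])
  have "poly q (x + 1) - poly q x = x ^ k" for x
  proof -
    have "poly q (x + 1) - poly q x
        = ((x + 1) ^ Suc k - x ^ Suc k - (poly S (x + 1) - poly S x)) / of_nat (Suc k)"
      unfolding q_def by (simp add: poly_monom field_simps del: of_nat_Suc power_Suc)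
    also have "\<dots> = of_nat (Suc k) * x ^ k / of_nat (Suc k)"
      by (simp only: power_Suc_add_1_diff S_diff add_diff_cancel_left')
    also have "\<dots> = x ^ k"
      by (simp del: of_nat_Suc)
    finally show ?thesis .
  qed
  then show ?case by blast
qed

lemma poly_antidifference:
  fixes p :: "'a::field_char_0 poly"
  obtains q where "\<And>x. poly q (x + 1) - poly q x = poly p x"
proof -
  from poly_antidifference_power obtain Q :: "nat \<Rightarrow> 'a poly"
    where Q: "\<And>i x. poly (Q i) (x + 1) - poly (Q i) x = x ^ i"
    by metis
  have "poly (\<Sum>i\<le>degree p. smult (coeff p i) (Q i)) (x + 1)
      - poly (\<Sum>i\<le>degree p. smult (coeff p i) (Q i)) x = poly p x" for x
    unfolding poly_sum sum_subtractf[symmetric] poly_altdef[of p]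
    by (intro sum.cong) (simp_all add: Q right_diff_distrib[symmetric])
  then show ?thesis
    by (rule that)
qed

lemma prod_monom:
  fixes a :: "'a \<Rightarrow> 'b::comm_semiring_1"
  assumes "finite A"
  shows "(\<Prod>x\<in>A. monom (a x) (n x)) = monom (\<Prod>x\<in>A. a x) (\<Sum>x\<in>A. n x)"
  using assms by (induction A rule: finite_induct) (simp_all add: mult_monom)

lemma coeff_prod_linear_factors:
  fixes a :: "'a \<Rightarrow> 'b::comm_semiring_1"
  assumes "finite A"
  shows "coeff (\<Prod>x\<in>A. [:1, a x:]) i
    = (\<Sum>S | S \<subseteq> A \<and> card S = i. \<Prod>x\<in>S. a x)"
proof -
  have "(\<Prod>x\<in>A. [:1, a x:]) = (\<Prod>x\<in>A. monom (a x) 1 + 1)"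
    by (simp add: monom_altdef one_pCons)
  also have "\<dots> = (\<Sum>S\<in>Pow A. monom (\<Prod>x\<in>S. a x) (card S))"
    using assms by (simp add: prod_add prod_monom finite_subset)
  finally have "coeff (\<Prod>x\<in>A. [:1, a x:]) i
      = (\<Sum>S\<in>Pow A. if card S = i then \<Prod>x\<in>S. a x else 0)"
    by (simp add: coeff_sum coeff_monom eq_commute)
  also have "\<dots> = (\<Sum>S\<in>{S\<in>Pow A. card S = i}. \<Prod>x\<in>S. a x)"
    using assms by (intro sum.inter_filter[symmetric]) simp
  finally show ?thesis
    by (simp add: Pow_def)
qed

lemma coeff_mult_linear_Suc:
  fixes p :: "'a::comm_ring_1 poly"
  shows "coeff (p * [:1, c:]) (Suc n) = coeff p (Suc n) + c * coeff p n"
  by (simp add: algebra_simps)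

lemma fps_nth_linear_mult_Suc:
  fixes f :: "'a::comm_ring_1 fps"
  shows "fps_nth (fps_of_poly [:1, c:] * f) (Suc n) = fps_nth f (Suc n) + c * fps_nth f n"
proof -
  have "fps_of_poly [:1, c:] * f = f + fps_X * (fps_const c * f)"
    by (simp add: fps_of_poly_pCons algebra_simps)
  then show ?thesis
    by simp
qed

definition sigma_gen_poly :: "nat \<Rightarrow> real poly" where
  "sigma_gen_poly j = (\<Prod>k\<in>{1..<j}. [:1, real k:])"

lemma coeff_sigma_gen_poly: "coeff (sigma_gen_poly j) i = sigma_int i j"
proof -
  let ?S = "{S. S \<subseteq> {1..<j} \<and> card S = i}"
  have "coeff (sigma_gen_poly j) i = (\<Sum>S\<in>?S. real (\<Prod>S))"
    by (simp add: sigma_gen_poly_def coeff_prod_linear_factors)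
  also have "\<dots> = sigma_int i j"
  proof -
    consider "i = 0" | "0 < i" "i \<le> j - 1" | "j - 1 < i"
      by linarith
    then show ?thesis
    proof cases
      case 1
      then have "?S = {{}}"
        by (auto simp: card_eq_0_iff intro: finite_subset)
      with 1 show ?thesis
        by (simp add: sigma_int_def)
    next
      case 2
      then have "{1..<j} = {1..j - 1}"
        by auto
      with 2 show ?thesis
        by (simp add: sigma_int_def)
    next
      case 3
      have "card S < i" if "S \<subseteq> {1..<j}" for S
        using 3 card_mono[OF finite_atLeastLessThan that] by simp
      then have "?S = {}"
        by auto
      with 3 show ?thesis
        unfolding sigma_int_def by (simp only: sum.empty) simp
    qed
  qed
  finally show ?thesis .
qed

lemma sigma_gen_poly_Suc: "sigma_gen_poly (Suc j) = sigma_gen_poly j * [:1, real j:]"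
  by (cases j) (simp_all add: sigma_gen_poly_def prod.atLeastLessThan_Suc)

lemma sigma_int_Suc_Suc: "sigma_int (Suc i) (Suc j) = sigma_int (Suc i) j + real j * sigma_int i j"
  by (simp only: coeff_sigma_gen_poly[symmetric] sigma_gen_poly_Suc coeff_mult_linear_Suc)

lemma sigma_int_polynomial: "\<exists>p. \<forall>j\<ge>1. poly p (real j) = sigma_int n j"
proof (induction n)
  case 0
  show ?case
    by (intro exI[of _ 1]) (simp add: sigma_int_def)
next
  case (Suc n)
  then obtain p where p: "\<And>j. j \<ge> 1 \<Longrightarrow> poly p (real j) = sigma_int n j"
    by blast
  obtain q where q: "\<And>x. poly q (x + 1) - poly q x = poly ([:0, 1:] * p) x"
    using poly_antidifference by blast
  txt \<open>sigma_(n+1) is the antidifference of x sigma_n(x) that vanishes at 1.\<close>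
  define r where "r = q - [:poly q 1:]"
  have "poly r (real j) = sigma_int (Suc n) j" if "j \<ge> 1" for j
    using that
  proof (induction j rule: dec_induct)
    case base
    show ?case
      by (simp add: r_def sigma_int_def)
  next
    case (step j)
    then show ?case
      using q[of "real j"] p[of j] by (simp add: r_def sigma_int_Suc_Suc algebra_simps)
  qed
  then show ?case
    by blast
qed

lemma poly_sigma_poly: "j \<ge> 1 \<Longrightarrow> poly (sigma_poly n) (real j) = sigma_int n j"
proof -
  obtain p where p: "\<And>j. j \<ge> 1 \<Longrightarrow> poly p (real j) = sigma_int n j"
    using sigma_int_polynomial by blast
  then have "sigma_poly n = p"
    unfolding sigma_poly_def by (rule The_poly_eqI)
  with p show "j \<ge> 1 \<Longrightarrow> poly (sigma_poly n) (real j) = sigma_int n j"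
    by simp
qed

lemma sigma_poly_0: "sigma_poly 0 = 1"
  unfolding sigma_poly_def by (rule The_poly_eqI) (simp add: sigma_int_def)

lemma poly_sigma_poly_Suc_shift:
  "poly (sigma_poly (Suc n)) (x + 1) = poly (sigma_poly (Suc n)) x + x * poly (sigma_poly n) x"
proof -
  let ?P = "sigma_poly (Suc n)"
  have "pcompose ?P [:1, 1:] = ?P + [:0, 1:] * sigma_poly n"
  proof (rule poly_eqI_of_nat_pos)
    fix j :: nat
    assume "j \<ge> 1"
    then show "poly (pcompose ?P [:1, 1:]) (of_nat j)
        = poly (?P + [:0, 1:] * sigma_poly n) (of_nat j)"
      using poly_sigma_poly[of "Suc j" "Suc n"]
      by (simp add: poly_pcompose poly_sigma_poly sigma_int_Suc_Suc add.commute)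
  qed
  then have "poly (pcompose ?P [:1, 1:]) x = poly (?P + [:0, 1:] * sigma_poly n) x"
    by simp
  then show ?thesis
    by (simp add: poly_pcompose add.commute)
qed

lemma poly_sigma_poly_Suc_0: "poly (sigma_poly (Suc n)) 0 = 0"
  using poly_sigma_poly_Suc_shift[of n 0] poly_sigma_poly[of 1 "Suc n"]
  by (simp add: sigma_int_def)

definition Q_series :: "nat \<Rightarrow> real fps" where
  "Q_series j = Abs_fps (\<lambda>k. Q_int k j)"

lemma sigma_gen_poly_mult_Q_series: "fps_of_poly (sigma_gen_poly j) * Q_series j = 1"
proof (rule fps_ext)
  fix n
  show "fps_nth (fps_of_poly (sigma_gen_poly j) * Q_series j) n = fps_nth 1 n"
  proof (cases n)
    case 0
    then show ?thesis
      by (simp add: fps_mult_nth Q_series_def coeff_sigma_gen_poly sigma_int_def)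
  next
    case (Suc k)
    have "fps_nth (fps_of_poly (sigma_gen_poly j) * Q_series j) n
        = (\<Sum>i=0..Suc k. sigma_int i j * Q_int (Suc k - i) j)"
      by (simp add: fps_mult_nth Q_series_def coeff_sigma_gen_poly Suc)
    also have "\<dots> = Q_int (Suc k) j + (\<Sum>i=1..Suc k. sigma_int i j * Q_int (Suc k - i) j)"
      by (subst sum.atLeast_Suc_atMost) (simp_all add: sigma_int_def)
    also have "\<dots> = 0"
      by simp
    finally show ?thesis
      using Suc by simp
  qed
qed

lemma Q_int_Suc_shift: "Q_int (Suc n) j = Q_int (Suc n) (Suc j) + real j * Q_int n (Suc j)"
proof -
  let ?F = "fps_of_poly (sigma_gen_poly j)"
  have "?F * (fps_of_poly [:1, real j:] * Q_series (Suc j)) = ?F * Q_series j"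
    using sigma_gen_poly_mult_Q_series[of "Suc j"] sigma_gen_poly_mult_Q_series[of j]
    by (simp only: sigma_gen_poly_Suc fps_of_poly_mult mult.assoc)
  moreover have "?F \<noteq> 0"
    using sigma_gen_poly_mult_Q_series[of j] by auto
  ultimately have "Q_series j = fps_of_poly [:1, real j:] * Q_series (Suc j)"
    by simp
  then have "fps_nth (Q_series j) (Suc n)
      = fps_nth (fps_of_poly [:1, real j:] * Q_series (Suc j)) (Suc n)"
    by simp
  then show ?thesis
    by (simp only: fps_nth_linear_mult_Suc) (simp add: Q_series_def)
qed

lemma Q_int_Suc_1: "Q_int (Suc n) 1 = 0"
proof -
  have "(\<Sum>i\<in>{1..Suc n}. sigma_int i 1 * Q_int (Suc n - i) 1) = 0"
    by (intro sum.neutral) (auto simp: sigma_int_def)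
  then show ?thesis
    by (simp only: Q_int.simps)
qed

definition reflected_sigma_poly :: "nat \<Rightarrow> real poly" where
  "reflected_sigma_poly n = smult ((-1) ^ n) (pcompose (sigma_poly n) [:1, -1:])"

lemma poly_reflected_sigma_poly:
  "poly (reflected_sigma_poly n) x = (-1) ^ n * poly (sigma_poly n) (1 - x)"
  by (simp add: reflected_sigma_poly_def poly_pcompose)

lemma poly_reflected_sigma_poly_Suc_shift:
  "poly (reflected_sigma_poly (Suc n)) (x + 1)
    = poly (reflected_sigma_poly (Suc n)) x - x * poly (reflected_sigma_poly n) (x + 1)"
proof -
  have "poly (sigma_poly (Suc n)) (- x)
      = poly (sigma_poly (Suc n)) (1 - x) + x * poly (sigma_poly n) (- x)"
    using poly_sigma_poly_Suc_shift[of n "- x"] by simp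
  then show ?thesis
    by (simp add: poly_reflected_sigma_poly algebra_simps)
qed

lemma poly_reflected_sigma_poly_of_nat:
  "j \<ge> 1 \<Longrightarrow> poly (reflected_sigma_poly n) (real j) = Q_int n j"
proof (induction n arbitrary: j)
  case 0
  show ?case
    by (simp add: poly_reflected_sigma_poly sigma_poly_0)
next
  case (Suc n)
  from Suc.prems show ?case
  proof (induction j rule: dec_induct)
    case base
    show ?case
      using Q_int_Suc_1[of n]
      by (simp add: poly_reflected_sigma_poly poly_sigma_poly_Suc_0 del: Q_int.simps)
  next
    case (step j)
    then show ?case
      using poly_reflected_sigma_poly_Suc_shift[of n "real j"] Suc.IH[of "Suc j"]
        Q_int_Suc_shift[of n j]
      by (simp add: add.commute del: Q_int.simps)
  qed
qed

theorem lemma2p4: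
  fixes n :: nat and t :: real
  shows "poly (Q_poly n) (1 - t) = (-1) ^ n * poly (sigma_poly n) t"
proof -
  have "Q_poly n = reflected_sigma_poly n"
    unfolding Q_poly_def by (intro The_poly_eqI poly_reflected_sigma_poly_of_nat)
  then show ?thesis
    by (simp add: poly_reflected_sigma_poly)
qed

end
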